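(* Let $G$ be an innately transitive permutation group on a finite set $\Omega$ with plinth $M$, and fix $\omega\in\Omega$. For a $G$-invariant Cartesian decomposition $\mathcal E=\{\Gamma_1,\ldots,\Gamma_\ell\}$ of $\Omega$, let $\gamma_i\in\Gamma_i$ be the part containing $\omega$ and set $K_i=M_{\gamma_i}$ (the setwise stabiliser in $M$). Then $\{K_1,\ldots,K_\ell\}$ is a Cartesian system of subgroups in $M$ with respect to $\omega$, and the map $\mathcal E\mapsto\{K_1,\ldots,K_\ell\}$ is a bijection between the set of $G$-invariant Cartesian decompositions of $\Omega$ and the set of Cartesian systems of subgroups in $M$ with respect to $\omega$.
   Context: A Cartesian decomposition of a finite set $\Omega$ is a set $\mathcal E=\{\Gamma_1,\ldots,\Gamma_\ell\}$ of partitions of $\Omega$ such that $|\gamma_1\cap\cdots\cap\gamma_\ell|=1$ for all $\gamma_1\in\Gamma_1,\ldots,\gamma_\ell\in\Gamma_\ell$; it is $G$-invariant if every element of $G$ permutes the partitions $\Gamma_i$ among themselves. A finite permutation group is innately transitive if it has a transitive minimal normal subgroup, called a plinth. If $G$ is innately transitive on $\Omega$ with plinth $M$ and $\omega\in\Omega$, a Cartesian system of subgroups in $M$ with respect to $\omega$ is a set $\{K_1,\ldots,K_\ell\}$ of subgroups of $M$ which is invariant under conjugation by the point stabiliser $G_\omega$ and satisfies (i) $\bigcap_{i=1}^\ell K_i=M_\omega$ and (ii) $K_i\bigl(\bigcap_{j\ne i}K_j\bigr)=M$ for all $i\in\{1,\ldots,\ell\}$ (for $\ell=1$ the empty intersection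 is $M$). *)

theory Defs
  imports "HOL-Combinatorics.Permutations"
begin

text \<open>Permutation groups on a finite set Omega are modelled as sets of functions
  that permute Omega (identity outside Omega), closed under composition and inverse.\<close>

definition perm_group :: "'a set \<Rightarrow> ('a \<Rightarrow> 'a) set \<Rightarrow> bool" where
  "perm_group \<Omega> G \<longleftrightarrow> G \<subseteq> {g. g permutes \<Omega>} \<and> id \<in> G \<and>
     (\<forall>g\<in>G. \<forall>h\<in>G. g \<circ> h \<in> G) \<and> (\<forall>g\<in>G. inv g \<in> G)"

definition normal_perm_subgroup :: "'a set \<Rightarrow> ('a \<Rightarrow> 'a) set \<Rightarrow> ('a \<Rightarrow> 'a) set \<Rightarrow> bool" where
  "normal_perm_subgroup \<Omega> G N \<longleftrightarrow> perm_group \<Omega> N \<and> N \<subseteq> G \<and>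
     (\<forall>g\<in>G. \<forall>n\<in>N. g \<circ> n \<circ> inv g \<in> N)"

definition minimal_normal :: "'a set \<Rightarrow> ('a \<Rightarrow> 'a) set \<Rightarrow> ('a \<Rightarrow> 'a) set \<Rightarrow> bool" where
  "minimal_normal \<Omega> G M \<longleftrightarrow> normal_perm_subgroup \<Omega> G M \<and> M \<noteq> {id} \<and>
     (\<forall>N. normal_perm_subgroup \<Omega> G N \<longrightarrow> N \<subseteq> M \<longrightarrow> N = {id} \<or> N = M)"

definition transitive_on :: "'a set \<Rightarrow> ('a \<Rightarrow> 'a) set \<Rightarrow> bool" where
  "transitive_on \<Omega> H \<longleftrightarrow> (\<forall>x\<in>\<Omega>. \<forall>y\<in>\<Omega>. \<exists>h\<in>H. h x = y)"

definition plinth :: "'a set \<Rightarrow> ('a \<Rightarrow> 'a) set \<Rightarrow> ('a \<Rightarrow> 'a) set \<Rightarrow> bool" where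
  "plinth \<Omega> G M \<longleftrightarrow> minimal_normal \<Omega> G M \<and> transitive_on \<Omega> M"

definition innately_transitive :: "'a set \<Rightarrow> ('a \<Rightarrow> 'a) set \<Rightarrow> bool" where
  "innately_transitive \<Omega> G \<longleftrightarrow> perm_group \<Omega> G \<and> (\<exists>M. plinth \<Omega> G M)"

definition stab :: "('a \<Rightarrow> 'a) set \<Rightarrow> 'a \<Rightarrow> ('a \<Rightarrow> 'a) set" where
  "stab H \<omega> = {h \<in> H. h \<omega> = \<omega>}"

definition setstab :: "('a \<Rightarrow> 'a) set \<Rightarrow> 'a set \<Rightarrow> ('a \<Rightarrow> 'a) set" where
  "setstab H \<gamma> = {h \<in> H. h ` \<gamma> = \<gamma>}"

definition is_partition :: "'a set \<Rightarrow> 'a set set \<Rightarrow> bool" where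
  "is_partition \<Omega> P \<longleftrightarrow> \<Union>P = \<Omega> \<and> {} \<notin> P \<and>
     (\<forall>A\<in>P. \<forall>B\<in>P. A \<noteq> B \<longrightarrow> A \<inter> B = {})"

definition cartesian_decomposition :: "'a set \<Rightarrow> 'a set set set \<Rightarrow> bool" where
  "cartesian_decomposition \<Omega> E \<longleftrightarrow> finite E \<and> (\<forall>\<Gamma>\<in>E. is_partition \<Omega> \<Gamma>) \<and>
     (\<forall>c. (\<forall>\<Gamma>\<in>E. c \<Gamma> \<in> \<Gamma>) \<longrightarrow> card (\<Omega> \<inter> (\<Inter>\<Gamma>\<in>E. c \<Gamma>)) = 1)"

definition invariant_cd :: "'a set \<Rightarrow> ('a \<Rightarrow> 'a) set \<Rightarrow> 'a set set set \<Rightarrow> bool" where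
  "invariant_cd \<Omega> G E \<longleftrightarrow> cartesian_decomposition \<Omega> E \<and>
     (\<forall>g\<in>G. \<forall>\<Gamma>\<in>E. (\<lambda>\<gamma>. g ` \<gamma>) ` \<Gamma> \<in> E)"

definition invariant_cds :: "'a set \<Rightarrow> ('a \<Rightarrow> 'a) set \<Rightarrow> 'a set set set set" where
  "invariant_cds \<Omega> G = {E. invariant_cd \<Omega> G E}"

definition part_of :: "'a set set \<Rightarrow> 'a \<Rightarrow> 'a set" where
  "part_of \<Gamma> \<omega> = (THE \<gamma>. \<gamma> \<in> \<Gamma> \<and> \<omega> \<in> \<gamma>)"

text \<open>Cartesian systems of subgroups in M with respect to omega.
  The intersection over an empty family is M (relativised to M).\<close>
definition set_prod :: "('a \<Rightarrow> 'a) set \<Rightarrow> ('a \<Rightarrow> 'a) set \<Rightarrow> ('a \<Rightarrow> 'a) set" where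
  "set_prod A B = {a \<circ> b | a b. a \<in> A \<and> b \<in> B}"

definition cartesian_system ::
  "'a set \<Rightarrow> ('a \<Rightarrow> 'a) set \<Rightarrow> ('a \<Rightarrow> 'a) set \<Rightarrow> 'a \<Rightarrow> ('a \<Rightarrow> 'a) set set \<Rightarrow> bool" where
  "cartesian_system \<Omega> G M \<omega> \<K> \<longleftrightarrow>
     (\<forall>K\<in>\<K>. perm_group \<Omega> K \<and> K \<subseteq> M) \<and>
     (\<forall>g\<in>stab G \<omega>. \<forall>K\<in>\<K>. (\<lambda>k. g \<circ> k \<circ> inv g) ` K \<in> \<K>) \<and>
     M \<inter> \<Inter>\<K> = stab M \<omega> \<and>
     (\<forall>K\<in>\<K>. set_prod K (M \<inter> \<Inter>(\<K> - {K})) = M)"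

definition cartesian_systems ::
  "'a set \<Rightarrow> ('a \<Rightarrow> 'a) set \<Rightarrow> ('a \<Rightarrow> 'a) set \<Rightarrow> 'a \<Rightarrow> ('a \<Rightarrow> 'a) set set set" where
  "cartesian_systems \<Omega> G M \<omega> = {\<K>. cartesian_system \<Omega> G M \<omega> \<K>}"

definition cd_to_system :: "('a \<Rightarrow> 'a) set \<Rightarrow> 'a \<Rightarrow> 'a set set set \<Rightarrow> ('a \<Rightarrow> 'a) set set" where
  "cd_to_system M \<omega> E = (\<lambda>\<Gamma>. setstab M (part_of \<Gamma> \<omega>)) ` E"

end

theory Submission
  imports Defs "HOL-Computational_Algebra.Primes" "HOL-Algebra.Group_Action"
begin

text \<open>
  The plinth \<open>M\<close> fixes every partition \<open>\<Gamma>\<close> of a \<open>G\<close>-invariant Cartesian decomposition.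
  Indeed, the kernel in \<open>M\<close> of the action on the set \<open>U\<close> of partitions of a given size
  \<open>n \<ge> 2\<close> is normal in \<open>G\<close>, hence trivial or all of \<open>M\<close>. If it were trivial, \<open>|M|\<close> would
  divide \<open>|U|!\<close>; but \<open>n^|U|\<close> divides \<open>|\<Omega>| = \<Prod>|\<Gamma>|\<close>, which divides \<open>|M|\<close> by transitivity,
  and \<open>u!\<close> is never divisible by \<open>p^u\<close> for a prime \<open>p\<close>.
  Consequently the part \<open>\<gamma>\<close> of \<open>\<omega>\<close> in \<open>\<Gamma>\<close> is a block of the transitive group \<open>M\<close>, and
  \<open>\<Gamma>\<close> consists of the \<open>M\<close>-translates of \<open>\<gamma> = \<omega>^K\<close> for \<open>K = M\<^sub>\<gamma>\<close>, so the decomposition is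
  recovered from its system of subgroups. Conversely, for a Cartesian system the \<open>M\<close>-translates
  of \<open>\<omega>^K\<close> form a block system for each \<open>K\<close>, and the factorisations
  \<open>K\<^sub>i (\<Inter>{K\<^sub>j | j \<noteq> i}) = M\<close> make every family of cosets \<open>m\<^sub>i K\<^sub>i\<close> meet, which is
  the intersection property of a Cartesian decomposition.
\<close>

(* HOL-Algebra's notation for group inverses would capture the function inverse inv of Defs. *)
unbundle no m_inv_syntax

section \<open>Prime powers dividing factorials\<close>

lemma multiplicity_fact_Suc:
  fixes p :: nat
  assumes "prime p"
  shows "multiplicity p (fact (Suc n)) = multiplicity p (Suc n) + multiplicity p (fact n)"
  using assms by (simp add: prime_elem_multiplicity_mult_distrib del: mult_Suc)

lemma multiplicity_fact:
  fixes p :: nat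
  assumes p: "prime p"
  shows "multiplicity p (fact u) = u div p + multiplicity p (fact (u div p))"
proof (induction u)
  case 0
  then show ?case by simp
next
  case (Suc u)
  have "p > 1" using p prime_gt_1_nat by blast
  show ?case
  proof (cases "p dvd Suc u")
    case True
    then obtain q where q: "Suc u = p * q" by blast
    then obtain r where r: "q = Suc r" by (cases q) auto
    have "Suc u div p = q" "u div p = r"
      using q r \<open>p > 1\<close> by (auto intro!: div_nat_eqI)
    moreover have "multiplicity p (Suc u) = Suc (multiplicity p q)"
      unfolding q using r \<open>p > 1\<close> by (intro multiplicity_times_same) auto
    ultimately show ?thesis
      using Suc.IH multiplicity_fact_Suc[OF p, of u] multiplicity_fact_Suc[OF p, of r] r by simp
  next
    case False
    then have "Suc u div p = u div p"
      by (metis div_Suc dvd_eq_mod_eq_0)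
    then show ?thesis
      using Suc.IH multiplicity_fact_Suc[OF p, of u] False by (simp add: not_dvd_imp_multiplicity_0)
  qed
qed

lemma multiplicity_fact_less:
  fixes p :: nat
  assumes p: "prime p" and "u > 0"
  shows "multiplicity p (fact u) < u"
  using \<open>u > 0\<close>
proof (induction u rule: less_induct)
  case (less u)
  have "p > 1" using p prime_gt_1_nat by blast
  then have "2 * (u div p) \<le> p * (u div p)" by simp
  also have "\<dots> \<le> u" by (rule times_div_less_eq_dividend)
  finally have "2 * (u div p) \<le> u" .
  moreover have "multiplicity p (fact (u div p)) < u div p" if "u div p > 0"
    using less.IH \<open>p > 1\<close> less.prems that by simp
  ultimately show ?case
    using multiplicity_fact[OF p, of u] less.prems by (cases "u div p = 0") auto
qed

lemma power_not_dvd_fact: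
  fixes n u :: nat
  assumes "n \<ge> 2" "u > 0"
  shows "\<not> n ^ u dvd fact u"
proof
  assume "n ^ u dvd fact u"
  obtain p where p: "prime p" "p dvd n" using assms(1) prime_factor_nat[of n] by auto
  have "p ^ u dvd fact u" using p(2) \<open>n ^ u dvd fact u\<close> dvd_power_same dvd_trans by blast
  then have "u \<le> multiplicity p (fact u)"
    using p(1) by (intro multiplicity_geI) (auto simp: prime_gt_1_nat)
  with multiplicity_fact_less[OF p(1) assms(2)] show False by simp
qed

lemma perm_group_permutes: "perm_group \<Omega> H \<Longrightarrow> h \<in> H \<Longrightarrow> h permutes \<Omega>"
  and perm_group_id: "perm_group \<Omega> H \<Longrightarrow> id \<in> H"
  and perm_group_comp: "perm_group \<Omega> H \<Longrightarrow> a \<in> H \<Longrightarrow> b \<in> H \<Longrightarrow> a \<circ> b \<in> H"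
  and perm_group_inv: "perm_group \<Omega> H \<Longrightarrow> h \<in> H \<Longrightarrow> inv h \<in> H"
  unfolding perm_group_def by auto

lemma finite_perm_group: "finite \<Omega> \<Longrightarrow> perm_group \<Omega> H \<Longrightarrow> finite H"
  using finite_permutations perm_group_permutes
  by (metis (no_types, lifting) finite_subset mem_Collect_eq subsetI)

definition perm_monoid :: "'a set \<Rightarrow> ('a \<Rightarrow> 'a) monoid" where
  "perm_monoid \<Omega> = \<lparr>carrier = {p. p permutes \<Omega>}, mult = (\<circ>), one = id\<rparr>"

lemma group_perm_monoid: "group (perm_monoid \<Omega>)"
  by (rule groupI)
    (auto simp: perm_monoid_def permutes_compose comp_assoc intro: permutes_inv permutes_inv_o)

lemma subgroup_perm_monoid:
  assumes "perm_group \<Omega> H"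
  shows "subgroup H (perm_monoid \<Omega>)"
proof (rule group.subgroupI[OF group_perm_monoid])
  show "H \<subseteq> carrier (perm_monoid \<Omega>)" "H \<noteq> {}"
    using perm_group_permutes[OF assms] perm_group_id[OF assms] by (auto simp: perm_monoid_def)
  fix a b assume "a \<in> H" "b \<in> H"
  then show "a \<otimes>\<^bsub>perm_monoid \<Omega>\<^esub> b \<in> H"
    using assms perm_group_comp by (simp add: perm_monoid_def)
  have "m_inv (perm_monoid \<Omega>) a = inv a"
    using perm_group_permutes[OF assms \<open>a \<in> H\<close>]
    by (intro group.inv_equality[OF group_perm_monoid])
      (auto simp: perm_monoid_def permutes_inv permutes_inv_o)
  then show "m_inv (perm_monoid \<Omega>) a \<in> H"
    using assms \<open>a \<in> H\<close> perm_group_inv by simp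
qed

lemma card_perm_group_dvd_fact:
  assumes "finite \<Omega>" "perm_group \<Omega> H"
  shows "card H dvd fact (card \<Omega>)"
proof -
  have "card H dvd order (perm_monoid \<Omega>)"
    using group.lagrange[OF group_perm_monoid subgroup_perm_monoid[OF assms(2)]] by (metis dvd_triv_right)
  then show ?thesis
    using card_permutations[OF refl assms(1)] by (simp add: order_def perm_monoid_def)
qed

lemma card_dvd_card_perm_group_if_transitive:
  assumes "perm_group \<Omega> H" "transitive_on \<Omega> H" "x \<in> \<Omega>"
  shows "card \<Omega> dvd card H"
proof -
  \<comment> \<open>\<open>BijGroup\<close> consists of extensional maps, hence the restriction to \<open>\<Omega>\<close>.\<close>
  let ?H = "(perm_monoid \<Omega>)\<lparr>carrier := H\<rparr>" and ?\<phi> = "\<lambda>h. restrict h \<Omega>"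
  have permutes: "h permutes \<Omega>" if "h \<in> carrier ?H" for h
    using that assms(1) perm_group_permutes by simp
  have "group_action ?H \<Omega> ?\<phi>"
    unfolding group_action_def group_hom_def group_hom_axioms_def
  proof (intro conjI homI)
    show "group ?H"
      using subgroup.subgroup_is_group[OF subgroup_perm_monoid[OF assms(1)] group_perm_monoid] .
    show "group (BijGroup \<Omega>)" by (rule group_BijGroup)
    show "?\<phi> h \<in> carrier (BijGroup \<Omega>)" if "h \<in> carrier ?H" for h
      using permutes[OF that] by (simp add: BijGroup_def Bij_def permutes_imp_bij)
    show "?\<phi> (a \<otimes>\<^bsub>?H\<^esub> b) = ?\<phi> a \<otimes>\<^bsub>BijGroup \<Omega>\<^esub> ?\<phi> b"
      if "a \<in> carrier ?H" "b \<in> carrier ?H" for a b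
      using permutes[OF that(1)] permutes[OF that(2)]
      by (auto simp: BijGroup_def Bij_def perm_monoid_def permutes_imp_bij compose_def permutes_in_image)
  qed
  then interpret group_action ?H \<Omega> ?\<phi> .
  have "orbit ?H ?\<phi> x = \<Omega>"
    using assms perm_group_permutes permutes_in_image by (fastforce simp: orbit_def transitive_on_def)
  then have "card \<Omega> * card (stabilizer ?H ?\<phi> x) = card H"
    using orbit_stabilizer_theorem[OF assms(3)] by (simp add: order_def)
  then show ?thesis by (metis dvd_triv_left)
qed

lemma perm_group_setstab:
  assumes "perm_group \<Omega> H"
  shows "perm_group \<Omega> (setstab H \<gamma>)"
proof -
  have "inv h ` \<gamma> = \<gamma>" if "h \<in> H" "h ` \<gamma> = \<gamma>" for h
    using image_inv_f_f[OF permutes_inj[OF perm_group_permutes[OF assms that(1)]], of \<gamma>] that(2) by simp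
  moreover have "(g \<circ> h) ` \<gamma> = \<gamma>" if "g ` \<gamma> = \<gamma>" "h ` \<gamma> = \<gamma>" for g h :: "'a \<Rightarrow> 'a"
    using that by (metis image_comp)
  ultimately show ?thesis
    using assms unfolding perm_group_def setstab_def by auto
qed

definition point_orbit :: "('a \<Rightarrow> 'a) set \<Rightarrow> 'a \<Rightarrow> 'a set" where
  "point_orbit K \<omega> = (\<lambda>k. k \<omega>) ` K"

lemma base_mem_point_orbit: "perm_group \<Omega> K \<Longrightarrow> \<omega> \<in> point_orbit K \<omega>"
  unfolding point_orbit_def by (rule image_eqI[where x = id]) (simp_all add: perm_group_id)

lemma image_point_orbit:
  assumes "perm_group \<Omega> K" "k \<in> K"
  shows "k ` point_orbit K \<omega> = point_orbit K \<omega>"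
proof (intro equalityI subsetI)
  fix x assume "x \<in> k ` point_orbit K \<omega>"
  then obtain h where "h \<in> K" "x = (k \<circ> h) \<omega>" by (auto simp: point_orbit_def)
  moreover have "k \<circ> h \<in> K" using perm_group_comp[OF assms(1,2) \<open>h \<in> K\<close>] .
  ultimately show "x \<in> point_orbit K \<omega>"
    unfolding point_orbit_def by blast
next
  fix x assume "x \<in> point_orbit K \<omega>"
  then obtain h where "h \<in> K" "x = h \<omega>" by (auto simp: point_orbit_def)
  then have "x = k ((inv k \<circ> h) \<omega>)"
    using permutes_inverses(1)[OF perm_group_permutes[OF assms]] by simp
  moreover have "inv k \<circ> h \<in> K"
    using perm_group_comp[OF assms(1) perm_group_inv[OF assms] \<open>h \<in> K\<close>] .
  ultimately show "x \<in> k ` point_orbit K \<omega>"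
    unfolding point_orbit_def by blast
qed

lemma point_orbit_subset:
  assumes "perm_group \<Omega> K" "\<omega> \<in> \<Omega>"
  shows "point_orbit K \<omega> \<subseteq> \<Omega>"
  using permutes_in_image[OF perm_group_permutes[OF assms(1)]] assms(2)
  by (auto simp: point_orbit_def)

lemma translates_point_orbit_eq:
  assumes "perm_group \<Omega> K" "b permutes \<Omega>" "inv b \<circ> a \<in> K"
  shows "a ` point_orbit K \<omega> = b ` point_orbit K \<omega>"
proof -
  have "a = b \<circ> (inv b \<circ> a)"
    using permutes_inv_o(1)[OF assms(2)] by (simp add: comp_assoc[symmetric])
  then have "a ` point_orbit K \<omega> = b ` (inv b \<circ> a) ` point_orbit K \<omega>"
    by (metis image_comp)
  then show ?thesis using image_point_orbit[OF assms(1,3)] by simp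
qed

section \<open>Minimal normal subgroups acting on a set\<close>

locale perm_group_action =
  fixes \<Omega> :: "'a set" and G :: "('a \<Rightarrow> 'a) set" and U :: "'b set"
    and \<alpha> :: "('a \<Rightarrow> 'a) \<Rightarrow> 'b \<Rightarrow> 'b"
  assumes perm_group: "perm_group \<Omega> G"
    and action_closed: "g \<in> G \<Longrightarrow> x \<in> U \<Longrightarrow> \<alpha> g x \<in> U"
    and action_id: "\<alpha> id x = x"
    and action_comp: "\<alpha> (a \<circ> b) x = \<alpha> a (\<alpha> b x)"
begin

lemma action_inv_action: "g \<in> G \<Longrightarrow> \<alpha> (inv g) (\<alpha> g x) = x"
  and action_action_inv: "g \<in> G \<Longrightarrow> \<alpha> g (\<alpha> (inv g) x) = x"
  using permutes_inv_o[OF perm_group_permutes[OF perm_group]]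
  by (metis action_comp action_id)+

lemma normal_kernel:
  assumes "normal_perm_subgroup \<Omega> G N"
  shows "normal_perm_subgroup \<Omega> G {n \<in> N. \<forall>x\<in>U. \<alpha> n x = x}"
proof -
  have inv_fixes: "\<alpha> (inv n) x = x" if "n \<in> G" "\<alpha> n x = x" for n x
    using action_inv_action[OF that(1), of x] that(2) by simp
  have conj_fixes: "\<alpha> (g \<circ> n \<circ> inv g) x = x"
    if "g \<in> G" "x \<in> U" "\<forall>y\<in>U. \<alpha> n y = y" for g n x
    using that action_closed[OF perm_group_inv[OF perm_group that(1)] that(2)]
    by (simp add: action_comp action_action_inv)
  show ?thesis
    using assms perm_group inv_fixes conj_fixes
    unfolding normal_perm_subgroup_def perm_group_def
    by (auto simp: action_comp action_id)
qed

definition induced_perm :: "('a \<Rightarrow> 'a) \<Rightarrow> 'b \<Rightarrow> 'b" where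
  "induced_perm g x = (if x \<in> U then \<alpha> g x else x)"

lemma induced_perm_permutes:
  assumes "g \<in> G"
  shows "induced_perm g permutes U"
proof (rule bij_imp_permutes)
  show "bij_betw (induced_perm g) U U"
    by (rule bij_betw_byWitness[where f' = "induced_perm (inv g)"])
      (use assms perm_group_inv[OF perm_group] action_closed
        in \<open>auto simp: induced_perm_def action_inv_action action_action_inv\<close>)
qed (simp add: induced_perm_def)

lemma induced_perm_id: "induced_perm id = id"
  by (simp add: induced_perm_def action_id fun_eq_iff)

lemma induced_perm_comp: "b \<in> G \<Longrightarrow> induced_perm (a \<circ> b) = induced_perm a \<circ> induced_perm b"
  by (auto simp: induced_perm_def action_comp action_closed)

lemma perm_group_induced_perm:
  assumes "perm_group \<Omega> H" "H \<subseteq> G"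
  shows "perm_group U (induced_perm ` H)"
  unfolding perm_group_def
proof (intro conjI ballI subsetI)
  show "p \<in> {p. p permutes U}" if "p \<in> induced_perm ` H" for p
    using that assms(2) induced_perm_permutes by auto
  show "id \<in> induced_perm ` H"
    using perm_group_id[OF assms(1)] induced_perm_id by (metis image_eqI)
  show "a \<circ> b \<in> induced_perm ` H" if ab: "a \<in> induced_perm ` H" "b \<in> induced_perm ` H" for a b
  proof -
    obtain h h' where "h \<in> H" "h' \<in> H" "a = induced_perm h" "b = induced_perm h'"
      using ab by blast
    then have "a \<circ> b = induced_perm (h \<circ> h')" using assms(2) induced_perm_comp by auto
    then show ?thesis using perm_group_comp[OF assms(1) \<open>h \<in> H\<close> \<open>h' \<in> H\<close>] by blast
  qed
  show "inv a \<in> induced_perm ` H" if "a \<in> induced_perm ` H" for a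
  proof -
    obtain h where h: "h \<in> H" "a = induced_perm h" using \<open>a \<in> induced_perm ` H\<close> by blast
    have "h \<in> G" "inv h \<in> G" using h(1) assms(2) perm_group_inv[OF perm_group] by auto
    then have "induced_perm h \<circ> induced_perm (inv h) = id" "induced_perm (inv h) \<circ> induced_perm h = id"
      using permutes_inv_o[OF perm_group_permutes[OF perm_group \<open>h \<in> G\<close>]]
      by (simp_all add: induced_perm_comp[symmetric] induced_perm_id)
    then have "inv a = induced_perm (inv h)"
      using h(2) inv_unique_comp by blast
    then show ?thesis using h perm_group_inv[OF assms(1)] by blast
  qed
qed

lemma minimal_normal_acts_trivially_or_dvd_fact:
  assumes "minimal_normal \<Omega> G M" "finite U"
  shows "(\<forall>m\<in>M. \<forall>x\<in>U. \<alpha> m x = x) \<or> card M dvd fact (card U)"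
proof -
  let ?N = "{m \<in> M. \<forall>x\<in>U. \<alpha> m x = x}"
  have normal: "normal_perm_subgroup \<Omega> G M" and pgM: "perm_group \<Omega> M" and "M \<subseteq> G"
    using assms(1) by (auto simp: minimal_normal_def normal_perm_subgroup_def)
  have "?N = {id} \<or> ?N = M"
    using assms(1) normal_kernel[OF normal] by (auto simp: minimal_normal_def)
  then show ?thesis
  proof
    assume trivial: "?N = {id}"
    have "inj_on induced_perm M"
    proof (rule inj_onI)
      fix a b assume ab: "a \<in> M" "b \<in> M" "induced_perm a = induced_perm b"
      have "\<alpha> (inv b \<circ> a) x = x" if "x \<in> U" for x
        using fun_cong[OF ab(3), of x] that \<open>M \<subseteq> G\<close> ab(2)
        by (auto simp: induced_perm_def action_comp action_inv_action)
      then have "inv b \<circ> a \<in> ?N"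
        using perm_group_comp[OF pgM perm_group_inv[OF pgM ab(2)] ab(1)] by blast
      then have "b \<circ> (inv b \<circ> a) = b" using trivial by auto
      then show "a = b"
        using permutes_inv_o(1)[OF perm_group_permutes[OF pgM ab(2)]] by (simp add: comp_assoc[symmetric])
    qed
    moreover have "card (induced_perm ` M) dvd fact (card U)"
      using card_perm_group_dvd_fact[OF assms(2) perm_group_induced_perm[OF pgM \<open>M \<subseteq> G\<close>]] .
    ultimately show ?thesis by (simp add: card_image)
  qed auto
qed

end

section \<open>Partitions and Cartesian decompositions\<close>

lemma partition_subset: "is_partition \<Omega> \<Gamma> \<Longrightarrow> \<gamma> \<in> \<Gamma> \<Longrightarrow> \<gamma> \<subseteq> \<Omega>"
  unfolding is_partition_def by blast

lemma part_of_eqI: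
  assumes "is_partition \<Omega> \<Gamma>" "\<gamma> \<in> \<Gamma>" "x \<in> \<gamma>"
  shows "part_of \<Gamma> x = \<gamma>"
  unfolding part_of_def
  using assms by (intro the_equality) (auto simp: is_partition_def)

lemma
  assumes "is_partition \<Omega> \<Gamma>" "x \<in> \<Omega>"
  shows part_of_mem: "part_of \<Gamma> x \<in> \<Gamma>" and mem_part_of: "x \<in> part_of \<Gamma> x"
proof -
  obtain \<gamma> where "\<gamma> \<in> \<Gamma>" "x \<in> \<gamma>" using assms unfolding is_partition_def by blast
  with part_of_eqI[OF assms(1)] show "part_of \<Gamma> x \<in> \<Gamma>" "x \<in> part_of \<Gamma> x" by simp_all
qed

lemma part_of_eq_if_mem:
  assumes "is_partition \<Omega> \<Gamma>" "x \<in> \<Omega>" "y \<in> part_of \<Gamma> x"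
  shows "part_of \<Gamma> y = part_of \<Gamma> x"
  using part_of_eqI[OF assms(1) part_of_mem[OF assms(1,2)] assms(3)] .

lemma part_of_image_eq:
  assumes "is_partition \<Omega> \<Gamma>"
  shows "part_of \<Gamma> ` \<Omega> = \<Gamma>"
proof (intro equalityI subsetI)
  fix \<gamma> assume "\<gamma> \<in> \<Gamma>"
  then have "\<gamma> \<noteq> {}" using assms unfolding is_partition_def by blast
  then obtain x where "x \<in> \<gamma>" by blast
  then show "\<gamma> \<in> part_of \<Gamma> ` \<Omega>"
    using part_of_eqI[OF assms \<open>\<gamma> \<in> \<Gamma>\<close>] partition_subset[OF assms \<open>\<gamma> \<in> \<Gamma>\<close>] by force
qed (use part_of_mem[OF assms] in blast)

lemma partition_eq_singleton:
  assumes "is_partition \<Omega> \<Gamma>" "\<Omega> \<noteq> {}" "card \<Gamma> \<le> 1" "finite \<Gamma>"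
  shows "\<Gamma> = {\<Omega>}"
proof -
  have "\<Gamma> \<noteq> {}" using assms(1,2) by (auto simp: is_partition_def)
  then obtain \<gamma> where "\<Gamma> = {\<gamma>}" using assms(3,4) by (metis card_0_eq card_1_singletonE le_Suc_eq One_nat_def le_zero_eq)
  then show ?thesis using assms(1) by (simp add: is_partition_def)
qed

lemma ex1_point_cartesian_decomposition:
  assumes "cartesian_decomposition \<Omega> E" "\<forall>\<Gamma>\<in>E. c \<Gamma> \<in> \<Gamma>"
  shows "\<exists>!x. x \<in> \<Omega> \<and> (\<forall>\<Gamma>\<in>E. x \<in> c \<Gamma>)"
proof -
  have "card (\<Omega> \<inter> (\<Inter>\<Gamma>\<in>E. c \<Gamma>)) = 1"
    using assms unfolding cartesian_decomposition_def by blast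
  then obtain x where "\<Omega> \<inter> (\<Inter>\<Gamma>\<in>E. c \<Gamma>) = {x}" by (rule card_1_singletonE)
  then show ?thesis by (intro ex1I[of _ x]) blast+
qed

lemma cartesian_decomposition_eqI:
  assumes "cartesian_decomposition \<Omega> E" "x \<in> \<Omega>" "y \<in> \<Omega>" "\<forall>\<Gamma>\<in>E. y \<in> part_of \<Gamma> x"
  shows "y = x"
proof -
  have part: "\<forall>\<Gamma>\<in>E. is_partition \<Omega> \<Gamma>" using assms(1) by (simp add: cartesian_decomposition_def)
  have "\<exists>!z. z \<in> \<Omega> \<and> (\<forall>\<Gamma>\<in>E. z \<in> part_of \<Gamma> x)"
    using part part_of_mem[OF _ assms(2)] by (intro ex1_point_cartesian_decomposition[OF assms(1)]) blast
  moreover have "\<forall>\<Gamma>\<in>E. x \<in> part_of \<Gamma> x" using part mem_part_of[OF _ assms(2)] by blast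
  ultimately show ?thesis using assms(2-4) by blast
qed

lemma card_cartesian_decomposition:
  assumes cd: "cartesian_decomposition \<Omega> E"
  shows "card \<Omega> = (\<Prod>\<Gamma>\<in>E. card \<Gamma>)"
proof -
  have part: "\<forall>\<Gamma>\<in>E. is_partition \<Omega> \<Gamma>" and "finite E"
    using cd by (simp_all add: cartesian_decomposition_def)
  have "bij_betw (\<lambda>x. restrict (\<lambda>\<Gamma>. part_of \<Gamma> x) E) \<Omega> (\<Pi>\<^sub>E \<Gamma>\<in>E. \<Gamma>)"
  proof (rule bij_betw_imageI)
    show "inj_on (\<lambda>x. restrict (\<lambda>\<Gamma>. part_of \<Gamma> x) E) \<Omega>"
    proof (rule inj_onI)
      fix x y assume "x \<in> \<Omega>" "y \<in> \<Omega>" "restrict (\<lambda>\<Gamma>. part_of \<Gamma> x) E = restrict (\<lambda>\<Gamma>. part_of \<Gamma> y) E"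
      then have "\<forall>\<Gamma>\<in>E. part_of \<Gamma> y = part_of \<Gamma> x"
        by (metis restrict_apply')
      then have "\<forall>\<Gamma>\<in>E. y \<in> part_of \<Gamma> x"
        using part mem_part_of[OF _ \<open>y \<in> \<Omega>\<close>] by metis
      then show "x = y" using cartesian_decomposition_eqI[OF cd \<open>x \<in> \<Omega>\<close> \<open>y \<in> \<Omega>\<close>] by simp
    qed
    show "(\<lambda>x. restrict (\<lambda>\<Gamma>. part_of \<Gamma> x) E) ` \<Omega> = (\<Pi>\<^sub>E \<Gamma>\<in>E. \<Gamma>)"
    proof
      show "(\<lambda>x. restrict (\<lambda>\<Gamma>. part_of \<Gamma> x) E) ` \<Omega> \<subseteq> (\<Pi>\<^sub>E \<Gamma>\<in>E. \<Gamma>)"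
        using part part_of_mem by fastforce
    next
      show "(\<Pi>\<^sub>E \<Gamma>\<in>E. \<Gamma>) \<subseteq> (\<lambda>x. restrict (\<lambda>\<Gamma>. part_of \<Gamma> x) E) ` \<Omega>"
      proof
        fix h assume h: "h \<in> (\<Pi>\<^sub>E \<Gamma>\<in>E. \<Gamma>)"
        then obtain x where "x \<in> \<Omega>" "\<forall>\<Gamma>\<in>E. x \<in> h \<Gamma>"
          using ex1_point_cartesian_decomposition[OF cd, of h] by auto
        then have "restrict (\<lambda>\<Gamma>. part_of \<Gamma> x) E = h"
          using h part part_of_eqI PiE_arb[OF h] by (fastforce simp: fun_eq_iff)
        then show "h \<in> (\<lambda>x. restrict (\<lambda>\<Gamma>. part_of \<Gamma> x) E) ` \<Omega>" using \<open>x \<in> \<Omega>\<close> by blast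
      qed
    qed
  qed
  then show ?thesis
    using bij_betw_same_card card_PiE[OF \<open>finite E\<close>] by fastforce
qed

lemma power_dvd_card_cartesian_decomposition:
  assumes "cartesian_decomposition \<Omega> E" "U \<subseteq> E" "\<forall>\<Gamma>\<in>U. card \<Gamma> = n"
  shows "n ^ card U dvd card \<Omega>"
proof -
  have "finite E" using assms(1) by (simp add: cartesian_decomposition_def)
  have "card \<Omega> = (\<Prod>\<Gamma>\<in>U. card \<Gamma>) * (\<Prod>\<Gamma>\<in>E - U. card \<Gamma>)"
    using card_cartesian_decomposition[OF assms(1)] prod.subset_diff[OF assms(2) \<open>finite E\<close>]
    by (simp add: mult.commute)
  then show ?thesis using assms(3) by simp
qed

section \<open>Cartesian systems of subgroups\<close>

definition system_partition :: "('a \<Rightarrow> 'a) set \<Rightarrow> 'a \<Rightarrow> ('a \<Rightarrow> 'a) set \<Rightarrow> 'a set set" where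
  "system_partition M \<omega> K = (\<lambda>m. m ` point_orbit K \<omega>) ` M"

definition system_to_cd :: "('a \<Rightarrow> 'a) set \<Rightarrow> 'a \<Rightarrow> ('a \<Rightarrow> 'a) set set \<Rightarrow> 'a set set set" where
  "system_to_cd M \<omega> \<K> = system_partition M \<omega> ` \<K>"

lemma
  assumes "cartesian_system \<Omega> G M \<omega> \<K>"
  shows cartesian_system_perm_group: "K \<in> \<K> \<Longrightarrow> perm_group \<Omega> K"
    and cartesian_system_subset: "K \<in> \<K> \<Longrightarrow> K \<subseteq> M"
    and cartesian_system_conj: "g \<in> stab G \<omega> \<Longrightarrow> K \<in> \<K> \<Longrightarrow> (\<lambda>k. g \<circ> k \<circ> inv g) ` K \<in> \<K>"
    and cartesian_system_Inter: "M \<inter> \<Inter>\<K> = stab M \<omega>"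
    and cartesian_system_set_prod: "K \<in> \<K> \<Longrightarrow> set_prod K (M \<inter> \<Inter>(\<K> - {K})) = M"
  using assms unfolding cartesian_system_def by simp_all

lemma cartesian_system_stab_subset:
  "cartesian_system \<Omega> G M \<omega> \<K> \<Longrightarrow> K \<in> \<K> \<Longrightarrow> stab M \<omega> \<subseteq> K"
  using cartesian_system_Inter[of \<Omega> G M \<omega> \<K>] Inter_lower[of K \<K>] by auto

section \<open>The plinth of an innately transitive group\<close>

locale pointed_plinth =
  fixes \<Omega> :: "'a set" and G M :: "('a \<Rightarrow> 'a) set" and \<omega> :: 'a
  assumes finite_Omega: "finite \<Omega>"
    and perm_group_G: "perm_group \<Omega> G"
    and plinth: "plinth \<Omega> G M"
    and base_point: "\<omega> \<in> \<Omega>"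
begin

lemma minimal_normal_M: "minimal_normal \<Omega> G M"
  and transitive_M: "transitive_on \<Omega> M"
  using plinth by (simp_all add: plinth_def)

lemma perm_group_M: "perm_group \<Omega> M"
  and M_subset_G: "M \<subseteq> G"
  and conj_in_M: "g \<in> G \<Longrightarrow> m \<in> M \<Longrightarrow> g \<circ> m \<circ> inv g \<in> M"
  using minimal_normal_M by (auto simp: minimal_normal_def normal_perm_subgroup_def)

lemma in_G_if_in_M [simp]: "m \<in> M \<Longrightarrow> m \<in> G"
  using M_subset_G by blast

lemma permutes_G: "g \<in> G \<Longrightarrow> g permutes \<Omega>"
  using perm_group_permutes[OF perm_group_G] .

lemma
  assumes "g \<in> G"
  shows G_comp_inv [simp]: "g \<circ> inv g = id" and G_inv_comp [simp]: "inv g \<circ> g = id"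
    and G_apply_inv [simp]: "g (inv g x) = x" and G_inv_apply [simp]: "inv g (g x) = x"
  using permutes_inv_o[OF permutes_G[OF assms]] permutes_inverses[OF permutes_G[OF assms]]
  by simp_all

lemma inv_in_G: "g \<in> G \<Longrightarrow> inv g \<in> G"
  using perm_group_inv[OF perm_group_G] .

lemma
  assumes "g \<in> G"
  shows G_inv_inv [simp]: "inv (inv g) = g"
    and G_inv_image_image [simp]: "inv g ` g ` A = A"
    and G_image_inv_image [simp]: "g ` inv g ` A = A"
  using permutes_inv_inv[OF permutes_G[OF assms]]
    image_inv_f_f[OF permutes_inj[OF permutes_G[OF assms]]]
    image_f_inv_f[OF permutes_surj[OF permutes_G[OF assms]]]
  by simp_all

lemma conj_inv_in_M: "g \<in> G \<Longrightarrow> m \<in> M \<Longrightarrow> inv g \<circ> m \<circ> g \<in> M"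
  using conj_in_M[OF inv_in_G] by fastforce

lemma G_apply_in_Omega: "g \<in> G \<Longrightarrow> x \<in> \<Omega> \<Longrightarrow> g x \<in> \<Omega>"
  using permutes_in_image[OF permutes_G] by simp

lemma transitive_ME:
  assumes "x \<in> \<Omega>" "y \<in> \<Omega>"
  obtains m where "m \<in> M" "m x = y"
  using transitive_M assms unfolding transitive_on_def by blast

lemma M_orbit:
  assumes "x \<in> \<Omega>"
  shows "(\<lambda>m. m x) ` M = \<Omega>"
proof (intro equalityI subsetI)
  fix y assume "y \<in> \<Omega>"
  then obtain m where "m \<in> M" "m x = y" using transitive_ME[OF assms] by blast
  then show "y \<in> (\<lambda>m. m x) ` M" by blast
qed (use G_apply_in_Omega assms in auto)

lemma finite_M: "finite M"
  using finite_perm_group[OF finite_Omega perm_group_M] .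

lemma card_Omega_dvd_card_M: "card \<Omega> dvd card M"
  using card_dvd_card_perm_group_if_transitive[OF perm_group_M transitive_M base_point] .

lemma M_fixes_invariant_partition:
  assumes "invariant_cd \<Omega> G E" "\<Gamma> \<in> E" "m \<in> M"
  shows "(`) m ` \<Gamma> = \<Gamma>"
proof -
  have cd: "cartesian_decomposition \<Omega> E" and part: "is_partition \<Omega> \<Gamma>" and "finite E"
    and closed: "\<And>g \<Delta>. g \<in> G \<Longrightarrow> \<Delta> \<in> E \<Longrightarrow> (`) g ` \<Delta> \<in> E"
    using assms(1,2) by (auto simp: invariant_cd_def cartesian_decomposition_def)
  have "finite \<Gamma>"
    using partition_subset[OF part] finite_Omega by (metis Pow_iff finite_Pow_iff finite_subset subsetI)
  define n where "n = card \<Gamma>"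
  show ?thesis
  proof (cases "n \<ge> 2")
    case False
    then have "\<Gamma> = {\<Omega>}"
      using partition_eq_singleton[OF part _ _ \<open>finite \<Gamma>\<close>] base_point n_def by fastforce
    then show ?thesis using permutes_image[OF permutes_G] assms(3) by simp
  next
    case True
    define U where "U = {\<Delta> \<in> E. card \<Delta> = n}"
    interpret perm_group_action \<Omega> G U "\<lambda>g. (`) ((`) g)"
    proof
      show "(`) ((`) g) \<Delta> \<in> U" if "g \<in> G" "\<Delta> \<in> U" for g \<Delta>
        using that closed inj_on_image[OF inj_on_subset[OF permutes_inj[OF permutes_G]]]
        by (auto simp: U_def card_image)
    qed (simp_all add: perm_group_G image_comp)
    have "\<Gamma> \<in> U" "finite U" using assms(2) \<open>finite E\<close> by (simp_all add: U_def n_def)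
    have "\<not> card M dvd fact (card U)"
    proof
      assume "card M dvd fact (card U)"
      moreover have "n ^ card U dvd card \<Omega>"
        by (rule power_dvd_card_cartesian_decomposition[OF cd]) (auto simp: U_def)
      ultimately have "n ^ card U dvd fact (card U)"
        using card_Omega_dvd_card_M dvd_trans by blast
      moreover have "card U > 0" using \<open>\<Gamma> \<in> U\<close> \<open>finite U\<close> card_gt_0_iff by blast
      ultimately show False using power_not_dvd_fact[OF True] by blast
    qed
    then show ?thesis
      using minimal_normal_acts_trivially_or_dvd_fact[OF minimal_normal_M \<open>finite U\<close>]
        \<open>\<Gamma> \<in> U\<close> assms(3) by blast
  qed
qed

lemma part_of_image:
  assumes "invariant_cd \<Omega> G E" "\<Gamma> \<in> E" "g \<in> G" "x \<in> \<Omega>"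
  shows "part_of ((`) g ` \<Gamma>) (g x) = g ` part_of \<Gamma> x"
proof -
  have part: "is_partition \<Omega> \<Gamma>" and part': "is_partition \<Omega> ((`) g ` \<Gamma>)"
    using assms(1-3) by (auto simp: invariant_cd_def cartesian_decomposition_def)
  show ?thesis
  proof (rule part_of_eqI[OF part'])
    show "g ` part_of \<Gamma> x \<in> (`) g ` \<Gamma>" using part_of_mem[OF part assms(4)] by blast
    show "g x \<in> g ` part_of \<Gamma> x" using mem_part_of[OF part assms(4)] by blast
  qed
qed

lemma image_part_of:
  assumes "invariant_cd \<Omega> G E" "\<Gamma> \<in> E" "m \<in> M" "x \<in> \<Omega>"
  shows "m ` part_of \<Gamma> x = part_of \<Gamma> (m x)"
  using part_of_image[OF assms(1,2) _ assms(4), of m] M_fixes_invariant_partition[OF assms(1-3)] assms(3)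
  by simp

lemma conj_setstab:
  assumes "g \<in> G"
  shows "(\<lambda>k. g \<circ> k \<circ> inv g) ` setstab M \<gamma> = setstab M (g ` \<gamma>)"
proof (intro equalityI subsetI)
  fix k' assume "k' \<in> (\<lambda>k. g \<circ> k \<circ> inv g) ` setstab M \<gamma>"
  then obtain k where k: "k \<in> M" "k ` \<gamma> = \<gamma>" "k' = g \<circ> k \<circ> inv g"
    by (auto simp: setstab_def)
  have "k' ` g ` \<gamma> = g ` k ` inv g ` g ` \<gamma>"
    unfolding k(3) by (simp only: image_comp comp_assoc)
  then have "k' ` g ` \<gamma> = g ` \<gamma>" using assms k(2) by simp
  then show "k' \<in> setstab M (g ` \<gamma>)"
    using conj_in_M[OF assms k(1)] k(3) by (simp add: setstab_def)
next
  fix k' assume "k' \<in> setstab M (g ` \<gamma>)"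
  then have "k' \<in> M" "k' ` g ` \<gamma> = g ` \<gamma>" by (auto simp: setstab_def)
  moreover have "(inv g \<circ> k' \<circ> g) ` \<gamma> = inv g ` k' ` g ` \<gamma>"
    by (simp only: image_comp comp_assoc)
  ultimately have "inv g \<circ> k' \<circ> g \<in> setstab M \<gamma>"
    using conj_inv_in_M assms by (simp add: setstab_def)
  moreover have "k' = g \<circ> (inv g \<circ> k' \<circ> g) \<circ> inv g"
    using assms by (simp add: fun_eq_iff)
  ultimately show "k' \<in> (\<lambda>k. g \<circ> k \<circ> inv g) ` setstab M \<gamma>" by blast
qed

lemma Inter_cd_to_system:
  assumes "invariant_cd \<Omega> G E"
  shows "M \<inter> \<Inter>(cd_to_system M \<omega> E) = stab M \<omega>"
proof -
  have cd: "cartesian_decomposition \<Omega> E" and part: "\<And>\<Gamma>. \<Gamma> \<in> E \<Longrightarrow> is_partition \<Omega> \<Gamma>"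
    using assms by (auto simp: invariant_cd_def cartesian_decomposition_def)
  have "m \<omega> = \<omega> \<longleftrightarrow> (\<forall>\<Gamma>\<in>E. m ` part_of \<Gamma> \<omega> = part_of \<Gamma> \<omega>)" if "m \<in> M" for m
  proof
    assume "m \<omega> = \<omega>"
    then show "\<forall>\<Gamma>\<in>E. m ` part_of \<Gamma> \<omega> = part_of \<Gamma> \<omega>"
      using image_part_of[OF assms _ that base_point] by simp
  next
    assume "\<forall>\<Gamma>\<in>E. m ` part_of \<Gamma> \<omega> = part_of \<Gamma> \<omega>"
    then have "\<forall>\<Gamma>\<in>E. m \<omega> \<in> part_of \<Gamma> \<omega>"
      using mem_part_of[OF part base_point] by blast
    then show "m \<omega> = \<omega>"
      using cartesian_decomposition_eqI[OF cd base_point G_apply_in_Omega[OF _ base_point]] that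
      by simp
  qed
  then show ?thesis by (auto simp: cd_to_system_def setstab_def stab_def)
qed

lemma ex_M_mixing_parts:
  assumes inv: "invariant_cd \<Omega> G E" and "\<Gamma> \<in> E" "x \<in> \<Omega>"
  shows "\<exists>a\<in>M. a ` part_of \<Gamma> \<omega> = part_of \<Gamma> \<omega> \<and>
    (\<forall>\<Delta>\<in>E - {\<Gamma>}. a ` part_of \<Delta> \<omega> = part_of \<Delta> x)"
proof -
  have cd: "cartesian_decomposition \<Omega> E" and part: "\<And>\<Delta>. \<Delta> \<in> E \<Longrightarrow> is_partition \<Omega> \<Delta>"
    using inv by (auto simp: invariant_cd_def cartesian_decomposition_def)
  let ?c = "\<lambda>\<Delta>. if \<Delta> = \<Gamma> then part_of \<Gamma> \<omega> else part_of \<Delta> x"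
  have c: "\<forall>\<Delta>\<in>E. ?c \<Delta> \<in> \<Delta>"
    using part_of_mem[OF part base_point] part_of_mem[OF part \<open>x \<in> \<Omega>\<close>] \<open>\<Gamma> \<in> E\<close> by simp
  obtain y where "y \<in> \<Omega>" and y: "\<forall>\<Delta>\<in>E. y \<in> ?c \<Delta>"
    using ex1_implies_ex[OF ex1_point_cartesian_decomposition[OF cd c]] by blast
  obtain a where "a \<in> M" "a \<omega> = y" using transitive_ME[OF base_point \<open>y \<in> \<Omega>\<close>] .
  then have a_part: "a ` part_of \<Delta> \<omega> = part_of \<Delta> y" if "\<Delta> \<in> E" for \<Delta>
    using image_part_of[OF inv that _ base_point] by simp
  have "a ` part_of \<Gamma> \<omega> = part_of \<Gamma> \<omega>"
    using a_part[OF \<open>\<Gamma> \<in> E\<close>] part_of_eq_if_mem[OF part[OF \<open>\<Gamma> \<in> E\<close>] base_point]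
      bspec[OF y \<open>\<Gamma> \<in> E\<close>] by simp
  moreover have "a ` part_of \<Delta> \<omega> = part_of \<Delta> x" if "\<Delta> \<in> E - {\<Gamma>}" for \<Delta>
  proof -
    have "\<Delta> \<in> E" "\<Delta> \<noteq> \<Gamma>" using that by auto
    then show ?thesis
      using a_part[OF \<open>\<Delta> \<in> E\<close>] part_of_eq_if_mem[OF part[OF \<open>\<Delta> \<in> E\<close>] \<open>x \<in> \<Omega>\<close>]
        bspec[OF y \<open>\<Delta> \<in> E\<close>] by simp
  qed
  ultimately show ?thesis using \<open>a \<in> M\<close> by blast
qed

lemma set_prod_cd_to_system:
  assumes inv: "invariant_cd \<Omega> G E" and "\<Gamma> \<in> E"
  defines "K \<equiv> setstab M (part_of \<Gamma> \<omega>)"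
  shows "set_prod K (M \<inter> \<Inter>(cd_to_system M \<omega> E - {K})) = M"
proof (intro equalityI subsetI)
  fix m assume "m \<in> set_prod K (M \<inter> \<Inter>(cd_to_system M \<omega> E - {K}))"
  then obtain a b where "m = a \<circ> b" "a \<in> M" "b \<in> M"
    unfolding set_prod_def K_def setstab_def by blast
  then show "m \<in> M" using perm_group_comp[OF perm_group_M] by simp
next
  fix m assume "m \<in> M"
  then have "m \<omega> \<in> \<Omega>" using G_apply_in_Omega base_point by simp
  then obtain a where "a \<in> M" "a ` part_of \<Gamma> \<omega> = part_of \<Gamma> \<omega>"
    and a: "\<forall>\<Delta>\<in>E - {\<Gamma>}. a ` part_of \<Delta> \<omega> = part_of \<Delta> (m \<omega>)"
    using ex_M_mixing_parts[OF inv \<open>\<Gamma> \<in> E\<close>] by blast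
  then have "a \<in> K" by (simp add: K_def setstab_def)
  define b where "b = inv a \<circ> m"
  have "b \<in> M"
    using perm_group_comp[OF perm_group_M perm_group_inv[OF perm_group_M \<open>a \<in> M\<close>] \<open>m \<in> M\<close>]
    by (simp add: b_def)
  have b_stab: "b \<in> setstab M (part_of \<Delta> \<omega>)" if "\<Delta> \<in> E" "\<Delta> \<noteq> \<Gamma>" for \<Delta>
  proof -
    have "b ` part_of \<Delta> \<omega> = inv a ` m ` part_of \<Delta> \<omega>"
      unfolding b_def by (rule image_comp[symmetric])
    also have "\<dots> = inv a ` a ` part_of \<Delta> \<omega>"
      using image_part_of[OF inv that(1) \<open>m \<in> M\<close> base_point] a that by simp
    also have "\<dots> = part_of \<Delta> \<omega>"
      using \<open>a \<in> M\<close> by simp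
    finally show ?thesis using \<open>b \<in> M\<close> by (simp add: setstab_def)
  qed
  have "b \<in> K'" if K': "K' \<in> cd_to_system M \<omega> E - {K}" for K'
  proof -
    obtain \<Delta> where "\<Delta> \<in> E" "K' = setstab M (part_of \<Delta> \<omega>)"
      using K' by (auto simp: cd_to_system_def)
    moreover have "\<Delta> \<noteq> \<Gamma>" using K' calculation(2) by (auto simp: K_def)
    ultimately show ?thesis using b_stab by simp
  qed
  then have "b \<in> M \<inter> \<Inter>(cd_to_system M \<omega> E - {K})"
    using \<open>b \<in> M\<close> by blast
  moreover have "m = a \<circ> b" using \<open>a \<in> M\<close> by (simp add: b_def fun_eq_iff)
  ultimately show "m \<in> set_prod K (M \<inter> \<Inter>(cd_to_system M \<omega> E - {K}))"
    using \<open>a \<in> K\<close> unfolding set_prod_def by blast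
qed

lemma cartesian_system_cd_to_system:
  assumes "invariant_cd \<Omega> G E"
  shows "cartesian_system \<Omega> G M \<omega> (cd_to_system M \<omega> E)"
  unfolding cartesian_system_def
proof (intro conjI ballI)
  fix K assume "K \<in> cd_to_system M \<omega> E"
  then show "perm_group \<Omega> K" "K \<subseteq> M"
    using perm_group_setstab[OF perm_group_M] by (auto simp: cd_to_system_def setstab_def)
  show "set_prod K (M \<inter> \<Inter>(cd_to_system M \<omega> E - {K})) = M"
    using set_prod_cd_to_system[OF assms] \<open>K \<in> cd_to_system M \<omega> E\<close> by (auto simp: cd_to_system_def)
next
  fix g K assume "g \<in> stab G \<omega>" "K \<in> cd_to_system M \<omega> E"
  then obtain \<Gamma> where \<Gamma>: "\<Gamma> \<in> E" "K = setstab M (part_of \<Gamma> \<omega>)" and g: "g \<in> G" "g \<omega> = \<omega>"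
    by (auto simp: cd_to_system_def stab_def)
  have "(\<lambda>k. g \<circ> k \<circ> inv g) ` K = setstab M (part_of ((`) g ` \<Gamma>) \<omega>)"
    using conj_setstab[OF g(1)] part_of_image[OF assms \<Gamma>(1) g(1) base_point] \<Gamma>(2) g(2) by simp
  moreover have "(`) g ` \<Gamma> \<in> E"
    using assms g(1) \<Gamma>(1) by (simp add: invariant_cd_def)
  ultimately show "(\<lambda>k. g \<circ> k \<circ> inv g) ` K \<in> cd_to_system M \<omega> E"
    by (simp add: cd_to_system_def)
qed (rule Inter_cd_to_system[OF assms])

lemma point_orbit_setstab_part_of:
  assumes inv: "invariant_cd \<Omega> G E" and "\<Gamma> \<in> E"
  shows "point_orbit (setstab M (part_of \<Gamma> \<omega>)) \<omega> = part_of \<Gamma> \<omega>"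
proof (intro equalityI subsetI)
  have part: "is_partition \<Omega> \<Gamma>"
    using assms by (auto simp: invariant_cd_def cartesian_decomposition_def)
  {
    fix x assume "x \<in> point_orbit (setstab M (part_of \<Gamma> \<omega>)) \<omega>"
    then obtain m where "m ` part_of \<Gamma> \<omega> = part_of \<Gamma> \<omega>" "x = m \<omega>"
      by (auto simp: point_orbit_def setstab_def)
    then show "x \<in> part_of \<Gamma> \<omega>" using mem_part_of[OF part base_point] by blast
  next
    fix x assume x: "x \<in> part_of \<Gamma> \<omega>"
    then have "x \<in> \<Omega>" using partition_subset[OF part part_of_mem[OF part base_point]] by blast
    then obtain a where "a \<in> M" "a \<omega> = x" using transitive_ME[OF base_point] by blast
    then have "a ` part_of \<Gamma> \<omega> = part_of \<Gamma> \<omega>"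
      using image_part_of[OF inv \<open>\<Gamma> \<in> E\<close> _ base_point] part_of_eq_if_mem[OF part base_point x] by simp
    then show "x \<in> point_orbit (setstab M (part_of \<Gamma> \<omega>)) \<omega>"
      using \<open>a \<in> M\<close> \<open>a \<omega> = x\<close> unfolding point_orbit_def setstab_def by blast
  }
qed

lemma system_partition_setstab_part_of:
  assumes inv: "invariant_cd \<Omega> G E" and "\<Gamma> \<in> E"
  shows "system_partition M \<omega> (setstab M (part_of \<Gamma> \<omega>)) = \<Gamma>"
proof -
  have part: "is_partition \<Omega> \<Gamma>"
    using assms by (auto simp: invariant_cd_def cartesian_decomposition_def)
  have "system_partition M \<omega> (setstab M (part_of \<Gamma> \<omega>)) = (\<lambda>m. part_of \<Gamma> (m \<omega>)) ` M"
    unfolding system_partition_def point_orbit_setstab_part_of[OF assms]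
    using image_part_of[OF assms _ base_point] by simp
  also have "\<dots> = part_of \<Gamma> ` (\<lambda>m. m \<omega>) ` M" by (simp add: image_image)
  also have "\<dots> = \<Gamma>" using M_orbit[OF base_point] part_of_image_eq[OF part] by simp
  finally show ?thesis .
qed

lemma system_to_cd_cd_to_system:
  assumes "invariant_cd \<Omega> G E"
  shows "system_to_cd M \<omega> (cd_to_system M \<omega> E) = E"
  using system_partition_setstab_part_of[OF assms]
  by (simp add: system_to_cd_def cd_to_system_def image_image)

lemma inv_comp_mem_if_translates_meet:
  assumes K: "perm_group \<Omega> K" "stab M \<omega> \<subseteq> K" "K \<subseteq> M" and "a \<in> M" "b \<in> M"
    and "a ` point_orbit K \<omega> \<inter> b ` point_orbit K \<omega> \<noteq> {}"
  shows "inv b \<circ> a \<in> K"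
proof -
  obtain k1 k2 where k: "k1 \<in> K" "k2 \<in> K" "a (k1 \<omega>) = b (k2 \<omega>)"
    using assms(6) by (auto simp: point_orbit_def)
  then have "k1 \<in> M" "k2 \<in> M" using K(3) by auto
  define h where "h = inv k2 \<circ> inv b \<circ> a \<circ> k1"
  have "h \<in> M"
    using perm_group_comp[OF perm_group_M] perm_group_inv[OF perm_group_M]
      \<open>k1 \<in> M\<close> \<open>k2 \<in> M\<close> \<open>a \<in> M\<close> \<open>b \<in> M\<close> by (simp add: h_def)
  moreover have "h \<omega> = \<omega>" using k(3) \<open>k2 \<in> M\<close> \<open>b \<in> M\<close> by (simp add: h_def)
  ultimately have "h \<in> K" using K(2) by (auto simp: stab_def)
  moreover have "inv b \<circ> a = k2 \<circ> h \<circ> inv k1"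
    using \<open>k1 \<in> M\<close> \<open>k2 \<in> M\<close> by (simp add: h_def fun_eq_iff)
  ultimately show ?thesis
    using perm_group_comp[OF K(1)] perm_group_inv[OF K(1)] k(1,2) by simp
qed

lemma is_partition_system_partition:
  assumes K: "perm_group \<Omega> K" "stab M \<omega> \<subseteq> K" "K \<subseteq> M"
  shows "is_partition \<Omega> (system_partition M \<omega> K)"
  unfolding is_partition_def
proof (intro conjI ballI impI)
  show "\<Union>(system_partition M \<omega> K) = \<Omega>"
  proof (intro equalityI subsetI)
    fix x assume "x \<in> \<Union>(system_partition M \<omega> K)"
    then obtain m y where "m \<in> M" "y \<in> point_orbit K \<omega>" "x = m y"
      by (auto simp: system_partition_def)
    then show "x \<in> \<Omega>" using G_apply_in_Omega point_orbit_subset[OF K(1) base_point] by auto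
  next
    fix x assume "x \<in> \<Omega>"
    then obtain m where "m \<in> M" "m \<omega> = x" using transitive_ME[OF base_point] by blast
    then show "x \<in> \<Union>(system_partition M \<omega> K)"
      using base_mem_point_orbit[OF K(1)] by (auto simp: system_partition_def)
  qed
  show "{} \<notin> system_partition M \<omega> K"
    using base_mem_point_orbit[OF K(1)] by (auto simp: system_partition_def)
next
  fix A B assume "A \<in> system_partition M \<omega> K" "B \<in> system_partition M \<omega> K" "A \<noteq> B"
  then obtain a b where ab: "a \<in> M" "b \<in> M" and "A = a ` point_orbit K \<omega>" "B = b ` point_orbit K \<omega>"
    by (auto simp: system_partition_def)
  show "A \<inter> B = {}"
  proof (rule ccontr)
    assume "A \<inter> B \<noteq> {}"
    then have "inv b \<circ> a \<in> K"
      using inv_comp_mem_if_translates_meet[OF K ab] \<open>A = _\<close> \<open>B = _\<close> by simp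
    then have "A = B"
      using translates_point_orbit_eq[OF K(1) permutes_G] ab \<open>A = _\<close> \<open>B = _\<close> by simp
    with \<open>A \<noteq> B\<close> show False ..
  qed
qed

lemma part_of_system_partition:
  assumes K: "perm_group \<Omega> K" "stab M \<omega> \<subseteq> K" "K \<subseteq> M"
  shows "part_of (system_partition M \<omega> K) \<omega> = point_orbit K \<omega>"
proof (rule part_of_eqI[OF is_partition_system_partition[OF K]])
  show "point_orbit K \<omega> \<in> system_partition M \<omega> K"
    unfolding system_partition_def by (rule image_eqI[where x = id]) (simp_all add: perm_group_id[OF perm_group_M])
qed (rule base_mem_point_orbit[OF K(1)])

lemma setstab_point_orbit:
  assumes K: "perm_group \<Omega> K" "stab M \<omega> \<subseteq> K" "K \<subseteq> M"
  shows "setstab M (point_orbit K \<omega>) = K"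
proof (intro equalityI subsetI)
  fix m assume "m \<in> setstab M (point_orbit K \<omega>)"
  then have "m \<in> M" "m ` point_orbit K \<omega> = id ` point_orbit K \<omega>" by (auto simp: setstab_def)
  then have "inv id \<circ> m \<in> K"
    using inv_comp_mem_if_translates_meet[OF K _ perm_group_id[OF perm_group_M]]
      base_mem_point_orbit[OF K(1)] by blast
  then show "m \<in> K" by (simp add: inv_id)
next
  fix k assume "k \<in> K"
  then show "k \<in> setstab M (point_orbit K \<omega>)"
    using K(3) image_point_orbit[OF K(1) \<open>k \<in> K\<close>] by (auto simp: setstab_def)
qed

lemma cd_to_system_system_to_cd:
  assumes "cartesian_system \<Omega> G M \<omega> \<K>"
  shows "cd_to_system M \<omega> (system_to_cd M \<omega> \<K>) = \<K>"
proof -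
  have "setstab M (part_of (system_partition M \<omega> K) \<omega>) = K" if "K \<in> \<K>" for K
    using part_of_system_partition setstab_point_orbit cartesian_system_perm_group[OF assms that]
      cartesian_system_stab_subset[OF assms that] cartesian_system_subset[OF assms that] by simp
  then show ?thesis by (simp add: cd_to_system_def system_to_cd_def image_image)
qed

lemma conj_image_M:
  assumes "g \<in> G"
  shows "(\<lambda>m. g \<circ> m \<circ> inv g) ` M = M"
proof (intro equalityI subsetI)
  fix m assume "m \<in> M"
  have "m = g \<circ> (inv g \<circ> m \<circ> g) \<circ> inv g" using assms by (simp add: fun_eq_iff)
  then show "m \<in> (\<lambda>m. g \<circ> m \<circ> inv g) ` M" using conj_inv_in_M[OF assms \<open>m \<in> M\<close>] by blast
qed (use conj_in_M[OF assms] in blast)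

lemma comp_image_M:
  assumes "a \<in> M"
  shows "(\<circ>) a ` M = M"
proof (intro equalityI subsetI)
  fix m assume "m \<in> M"
  have "m = a \<circ> (inv a \<circ> m)" using assms by (simp add: fun_eq_iff)
  then show "m \<in> (\<circ>) a ` M"
    using perm_group_comp[OF perm_group_M perm_group_inv[OF perm_group_M assms] \<open>m \<in> M\<close>] by blast
qed (use perm_group_comp[OF perm_group_M assms] in blast)

lemma point_orbit_conj:
  assumes "g \<in> G" "g \<omega> = \<omega>"
  shows "point_orbit ((\<lambda>k. g \<circ> k \<circ> inv g) ` K) \<omega> = g ` point_orbit K \<omega>"
proof -
  have "inv g \<omega> = \<omega>" using G_inv_apply[OF assms(1), of \<omega>] assms(2) by simp
  then show ?thesis by (simp add: point_orbit_def image_image)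
qed

lemma image_system_partition_conj:
  assumes "g \<in> G" "g \<omega> = \<omega>"
  shows "(`) g ` system_partition M \<omega> K = system_partition M \<omega> ((\<lambda>k. g \<circ> k \<circ> inv g) ` K)"
proof -
  have "g ` m ` point_orbit K \<omega> = (g \<circ> m \<circ> inv g) ` point_orbit ((\<lambda>k. g \<circ> k \<circ> inv g) ` K) \<omega>" for m
    unfolding point_orbit_conj[OF assms] using assms(1) by (simp add: image_image)
  then have "(`) g ` system_partition M \<omega> K
      = (\<lambda>m. m ` point_orbit ((\<lambda>k. g \<circ> k \<circ> inv g) ` K) \<omega>) ` (\<lambda>m. g \<circ> m \<circ> inv g) ` M"
    by (simp add: system_partition_def image_image)
  then show ?thesis by (simp add: conj_image_M[OF assms(1)] system_partition_def)
qed

lemma image_system_partition_M: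
  assumes "a \<in> M"
  shows "(`) a ` system_partition M \<omega> K = system_partition M \<omega> K"
proof -
  have "(`) a ` system_partition M \<omega> K = (\<lambda>m. m ` point_orbit K \<omega>) ` (\<circ>) a ` M"
    by (simp add: system_partition_def image_image image_comp)
  then show ?thesis by (simp add: comp_image_M[OF assms] system_partition_def)
qed

lemma image_system_partition:
  assumes cs: "cartesian_system \<Omega> G M \<omega> \<K>" and "g \<in> G" "K \<in> \<K>"
  shows "(`) g ` system_partition M \<omega> K \<in> system_to_cd M \<omega> \<K>"
proof -
  obtain a where "a \<in> M" "a \<omega> = g \<omega>"
    using transitive_ME[OF base_point G_apply_in_Omega[OF \<open>g \<in> G\<close> base_point]] .
  define g0 where "g0 = inv a \<circ> g"
  have "g0 \<in> G" "g0 \<omega> = \<omega>"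
    using perm_group_comp[OF perm_group_G inv_in_G \<open>g \<in> G\<close>] \<open>a \<in> M\<close> \<open>a \<omega> = g \<omega>\<close>
    by (auto simp: g0_def dest: sym)
  have "g = a \<circ> g0" using \<open>a \<in> M\<close> by (simp add: g0_def fun_eq_iff)
  then have "(`) g ` system_partition M \<omega> K = (`) a ` (`) g0 ` system_partition M \<omega> K"
    by (simp add: image_image image_comp)
  also have "\<dots> = system_partition M \<omega> ((\<lambda>k. g0 \<circ> k \<circ> inv g0) ` K)"
    using image_system_partition_conj[OF \<open>g0 \<in> G\<close> \<open>g0 \<omega> = \<omega>\<close>] image_system_partition_M[OF \<open>a \<in> M\<close>]
    by simp
  finally show ?thesis
    using cartesian_system_conj[OF cs _ \<open>K \<in> \<K>\<close>, of g0] \<open>g0 \<in> G\<close> \<open>g0 \<omega> = \<omega>\<close>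
    by (simp add: system_to_cd_def stab_def)
qed

lemma finite_cartesian_system: "cartesian_system \<Omega> G M \<omega> \<K> \<Longrightarrow> finite \<K>"
  using finite_M cartesian_system_subset by (meson Pow_iff finite_Pow_iff finite_subset subsetI)

lemma cartesian_system_coset_intersection:
  assumes cs: "cartesian_system \<Omega> G M \<omega> \<K>" and c: "\<forall>K\<in>\<K>. c K \<in> M"
  shows "\<exists>m\<in>M. \<forall>K\<in>\<K>. inv (c K) \<circ> m \<in> K"
proof -
  \<comment> \<open>Since \<open>K\<^sub>0 (\<Inter>(\<K> - {K\<^sub>0})) = M\<close>, a common element of the cosets indexed by \<open>\<S>\<close> can be
    corrected on the right by an element of \<open>\<Inter>(\<K> - {K\<^sub>0})\<close> to lie in the coset of \<open>K\<^sub>0\<close> too.\<close>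
  have "\<exists>m\<in>M. \<forall>K\<in>\<S>. inv (c K) \<circ> m \<in> K" if "finite \<S>" "\<S> \<subseteq> \<K>" for \<S>
    using that
  proof (induction \<S> rule: finite_induct)
    case empty
    then show ?case using perm_group_id[OF perm_group_M] by blast
  next
    case (insert K0 \<S>)
    then obtain m where "m \<in> M" and m: "\<forall>K\<in>\<S>. inv (c K) \<circ> m \<in> K" by blast
    have "K0 \<in> \<K>" using insert.prems by blast
    have "inv (c K0) \<circ> m \<in> M"
      using perm_group_comp[OF perm_group_M perm_group_inv[OF perm_group_M] \<open>m \<in> M\<close>] c \<open>K0 \<in> \<K>\<close>
      by blast
    then obtain k w where kw: "inv (c K0) \<circ> m = k \<circ> w" "k \<in> K0" "w \<in> M" "\<forall>K\<in>\<K> - {K0}. w \<in> K"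
      using cartesian_system_set_prod[OF cs \<open>K0 \<in> \<K>\<close>] unfolding set_prod_def by blast
    have "m \<circ> inv w \<in> M"
      using perm_group_comp[OF perm_group_M \<open>m \<in> M\<close> perm_group_inv[OF perm_group_M \<open>w \<in> M\<close>]] .
    moreover have "inv (c K0) \<circ> (m \<circ> inv w) \<in> K0"
    proof -
      have "inv (c K0) \<circ> (m \<circ> inv w) = k \<circ> (w \<circ> inv w)"
        using kw(1) by (simp only: comp_assoc[symmetric])
      then show ?thesis using kw(2) \<open>w \<in> M\<close> by simp
    qed
    moreover have "inv (c K) \<circ> (m \<circ> inv w) \<in> K" if "K \<in> \<S>" for K
    proof -
      have "K \<in> \<K> - {K0}" using that insert.hyps(2) insert.prems by blast
      then have "inv w \<in> K"
        using kw(4) perm_group_inv[OF cartesian_system_perm_group[OF cs]] by blast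
      then show ?thesis
        using perm_group_comp[OF cartesian_system_perm_group[OF cs] bspec[OF m that]] \<open>K \<in> \<K> - {K0}\<close>
        by (simp add: comp_assoc)
    qed
    ultimately show ?case by blast
  qed
  then show ?thesis using finite_cartesian_system[OF cs] by blast
qed

lemma ex1_point_cartesian_system:
  assumes cs: "cartesian_system \<Omega> G M \<omega> \<K>" and c: "\<forall>K\<in>\<K>. c K \<in> M"
  shows "\<exists>!x. x \<in> \<Omega> \<and> (\<forall>K\<in>\<K>. x \<in> c K ` point_orbit K \<omega>)"
proof -
  obtain m where "m \<in> M" and m: "\<forall>K\<in>\<K>. inv (c K) \<circ> m \<in> K"
    using cartesian_system_coset_intersection[OF assms] by blast
  have K: "perm_group \<Omega> K" "stab M \<omega> \<subseteq> K" "K \<subseteq> M" if "K \<in> \<K>" for K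
    using cartesian_system_perm_group[OF cs that] cartesian_system_stab_subset[OF cs that]
      cartesian_system_subset[OF cs that] by simp_all
  have blocks: "c K ` point_orbit K \<omega> = m ` point_orbit K \<omega>" if "K \<in> \<K>" for K
    using translates_point_orbit_eq[OF K(1)[OF that] permutes_G, of "c K" m] m that c by simp
  show ?thesis
  proof (rule ex1I[of _ "m \<omega>"])
    show "m \<omega> \<in> \<Omega> \<and> (\<forall>K\<in>\<K>. m \<omega> \<in> c K ` point_orbit K \<omega>)"
      using G_apply_in_Omega[OF _ base_point] \<open>m \<in> M\<close> blocks base_mem_point_orbit[OF K(1)] by auto
  next
    fix y assume y: "y \<in> \<Omega> \<and> (\<forall>K\<in>\<K>. y \<in> c K ` point_orbit K \<omega>)"
    then obtain b where "b \<in> M" "b \<omega> = y" using transitive_ME[OF base_point] by blast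
    have "inv m \<circ> b \<in> K" if "K \<in> \<K>" for K
    proof (rule inv_comp_mem_if_translates_meet[OF K[OF that] \<open>b \<in> M\<close> \<open>m \<in> M\<close>])
      have "y \<in> b ` point_orbit K \<omega>" using \<open>b \<omega> = y\<close> base_mem_point_orbit[OF K(1)[OF that]] by blast
      then show "b ` point_orbit K \<omega> \<inter> m ` point_orbit K \<omega> \<noteq> {}"
        using y blocks[OF that] that by blast
    qed
    moreover have "inv m \<circ> b \<in> M"
      using perm_group_comp[OF perm_group_M perm_group_inv[OF perm_group_M \<open>m \<in> M\<close>] \<open>b \<in> M\<close>] .
    ultimately have "inv m \<circ> b \<in> stab M \<omega>"
      using cartesian_system_Inter[OF cs] by blast
    then show "y = m \<omega>"
      using \<open>b \<omega> = y\<close> \<open>m \<in> M\<close> G_apply_inv[of m "b \<omega>"] by (auto simp: stab_def)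
  qed
qed

lemma invariant_cd_system_to_cd:
  assumes cs: "cartesian_system \<Omega> G M \<omega> \<K>"
  shows "invariant_cd \<Omega> G (system_to_cd M \<omega> \<K>)"
  unfolding invariant_cd_def cartesian_decomposition_def
proof (intro conjI allI impI ballI)
  show "finite (system_to_cd M \<omega> \<K>)"
    using finite_cartesian_system[OF cs] by (simp add: system_to_cd_def)
  show "is_partition \<Omega> \<Gamma>" if "\<Gamma> \<in> system_to_cd M \<omega> \<K>" for \<Gamma>
    using that is_partition_system_partition cartesian_system_perm_group[OF cs]
      cartesian_system_stab_subset[OF cs] cartesian_system_subset[OF cs]
    by (auto simp: system_to_cd_def)
  show "(\<lambda>\<gamma>. g ` \<gamma>) ` \<Gamma> \<in> system_to_cd M \<omega> \<K>" if "g \<in> G" "\<Gamma> \<in> system_to_cd M \<omega> \<K>" for g \<Gamma>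
    using that image_system_partition[OF cs] by (auto simp: system_to_cd_def)
next
  fix c assume c: "\<forall>\<Gamma>\<in>system_to_cd M \<omega> \<K>. c \<Gamma> \<in> \<Gamma>"
  have "\<exists>m\<in>M. c (system_partition M \<omega> K) = m ` point_orbit K \<omega>" if "K \<in> \<K>" for K
  proof -
    have "c (system_partition M \<omega> K) \<in> system_partition M \<omega> K"
      using c that by (simp add: system_to_cd_def)
    then show ?thesis by (auto simp: system_partition_def)
  qed
  then obtain a where a: "\<forall>K\<in>\<K>. a K \<in> M \<and> c (system_partition M \<omega> K) = a K ` point_orbit K \<omega>"
    by metis
  then obtain x where "\<forall>y. y \<in> \<Omega> \<and> (\<forall>K\<in>\<K>. y \<in> a K ` point_orbit K \<omega>) \<longleftrightarrow> y = x"
    using ex1_point_cartesian_system[OF cs, of a] by (metis (no_types, lifting))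
  then have "\<Omega> \<inter> (\<Inter>\<Gamma>\<in>system_to_cd M \<omega> \<K>. c \<Gamma>) = {x}"
    using a by (auto simp: system_to_cd_def)
  then show "card (\<Omega> \<inter> (\<Inter>\<Gamma>\<in>system_to_cd M \<omega> \<K>. c \<Gamma>)) = 1" by simp
qed

end

theorem theorem3p3:
  fixes \<Omega> :: "'a set" and G M :: "('a \<Rightarrow> 'a) set" and \<omega> :: 'a
  assumes "finite \<Omega>"
    and "innately_transitive \<Omega> G"
    and "plinth \<Omega> G M"
    and "\<omega> \<in> \<Omega>"
  shows "(\<forall>E \<in> invariant_cds \<Omega> G. cartesian_system \<Omega> G M \<omega> (cd_to_system M \<omega> E)) \<and>
         bij_betw (cd_to_system M \<omega>) (invariant_cds \<Omega> G) (cartesian_systems \<Omega> G M \<omega>)"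
proof -
  interpret pointed_plinth \<Omega> G M \<omega>
    using assms by unfold_locales (simp_all add: innately_transitive_def)
  have "bij_betw (cd_to_system M \<omega>) (invariant_cds \<Omega> G) (cartesian_systems \<Omega> G M \<omega>)"
    by (rule bij_betw_byWitness[where f' = "system_to_cd M \<omega>"])
      (auto simp: invariant_cds_def cartesian_systems_def system_to_cd_cd_to_system
        cd_to_system_system_to_cd cartesian_system_cd_to_system invariant_cd_system_to_cd)
  then show ?thesis
    by (simp add: invariant_cds_def cartesian_system_cd_to_system)
qed

end
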